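(* Let $P$ be the set of $n\geq 3$ points equally spaced on the unit circle. Every $t$-spanner on $P$ with $t<2$ that has tree-width $2$ is plane.
   Context: A $t$-spanner on $P$ is a graph with vertex set $P$, edges weighted by Euclidean distance, such that for all $p\neq p'\in P$ the shortest-path distance between $p$ and $p'$ is at most $t$ times their Euclidean distance. Plane means the straight-line drawing with vertices at the points of $P$ has no edge crossings. *)

theory Defs
  imports "HOL-Analysis.Analysis"
begin

text \<open>Geometric graphs in the plane, with the plane modelled as the complex numbers
  (so dist is the Euclidean distance).\<close>

definition graph_on :: "'a set \<Rightarrow> 'a set set \<Rightarrow> bool" where
  "graph_on V E \<longleftrightarrow> (\<forall>e\<in>E. e \<subseteq> V \<and> card e = 2)"

definition is_walk :: "'a set set \<Rightarrow> 'a \<Rightarrow> 'a \<Rightarrow> 'a list \<Rightarrow> bool" where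
  "is_walk E p q ps \<longleftrightarrow> ps \<noteq> [] \<and> hd ps = p \<and> last ps = q \<and>
     (\<forall>i < length ps - 1. {ps ! i, ps ! Suc i} \<in> E)"

definition walk_length :: "complex list \<Rightarrow> real" where
  "walk_length ps = (\<Sum>i < length ps - 1. dist (ps ! i) (ps ! Suc i))"

text \<open>t-spanner: for all distinct p, p' in P the shortest-path distance is at most
  t times the Euclidean distance. In a finite graph with positive edge weights the
  shortest-path distance is attained by some walk, so this is equivalent to the
  existence of a walk of length at most t |p p'|.\<close>
definition t_spanner :: "real \<Rightarrow> complex set \<Rightarrow> complex set set \<Rightarrow> bool" where
  "t_spanner t P E \<longleftrightarrow> graph_on P E \<and>
     (\<forall>p\<in>P. \<forall>p'\<in>P. p \<noteq> p' \<longrightarrow>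
        (\<exists>ps. is_walk E p p' ps \<and> walk_length ps \<le> t * dist p p'))"

definition plane :: "complex set set \<Rightarrow> bool" where
  "plane E \<longleftrightarrow> (\<forall>a b c d. {a, b} \<in> E \<longrightarrow> {c, d} \<in> E \<longrightarrow> {a, b} \<noteq> {c, d} \<longrightarrow>
      closed_segment a b \<inter> closed_segment c d \<subseteq> {a, b} \<inter> {c, d})"

definition ug_connected :: "'b set \<Rightarrow> 'b set set \<Rightarrow> bool" where
  "ug_connected I TE \<longleftrightarrow>
     (\<forall>i\<in>I. \<forall>j\<in>I. (i, j) \<in> {(a, b). {a, b} \<in> TE \<and> a \<in> I \<and> b \<in> I}\<^sup>*)"

definition is_tree :: "nat set \<Rightarrow> nat set set \<Rightarrow> bool" where
  "is_tree I TE \<longleftrightarrow> finite I \<and> I \<noteq> {} \<and> graph_on I TE \<and> ug_connected I TE \<and>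
     card TE = card I - 1"

definition tree_decomposition ::
    "'a set \<Rightarrow> 'a set set \<Rightarrow> nat set \<Rightarrow> nat set set \<Rightarrow> (nat \<Rightarrow> 'a set) \<Rightarrow> bool" where
  "tree_decomposition V E I TE B \<longleftrightarrow> is_tree I TE \<and>
     (\<forall>i\<in>I. B i \<subseteq> V) \<and> (\<Union>i\<in>I. B i) = V \<and>
     (\<forall>e\<in>E. \<exists>i\<in>I. e \<subseteq> B i) \<and>
     (\<forall>v\<in>V. ug_connected {i\<in>I. v \<in> B i} {e\<in>TE. e \<subseteq> {i\<in>I. v \<in> B i}})"

definition td_width :: "nat set \<Rightarrow> (nat \<Rightarrow> 'a set) \<Rightarrow> nat" where
  "td_width I B = Max ((\<lambda>i. card (B i)) ` I) - 1"

definition treewidth :: "'a set \<Rightarrow> 'a set set \<Rightarrow> nat" where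
  "treewidth V E = (LEAST w. \<exists>I TE B. tree_decomposition V E I TE B \<and> td_width I B = w)"

end

(* For t < 2 the spanner must contain every side of the regular polygon: any other walk between
   neighbouring vertices has at least two edges, each at least as long as a side. If two edges
   crossed, they would be chords with interleaving endpoints (read off from the signs of an
   orientation determinant); together with the boundary cycle they form a K_4 minor. By the Helly
   property of subtrees of a tree, every tree decomposition then has a bag meeting all four branch
   sets, so the tree-width is at least 3. *)

theory Submission
  imports Defs
begin

section \<open>Trees and the Helly property of subtrees\<close>

definition edge_rel :: "'b set \<Rightarrow> 'b set set \<Rightarrow> ('b \<times> 'b) set" where
  "edge_rel S TE = {(a, b). {a, b} \<in> TE \<and> a \<in> S \<and> b \<in> S}"

lemma ug_connected_iff_edge_rel:
  "ug_connected S TE \<longleftrightarrow> (\<forall>i\<in>S. \<forall>j\<in>S. (i, j) \<in> (edge_rel S TE)\<^sup>*)"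
  by (simp add: ug_connected_def edge_rel_def)

lemma converse_edge_rel [simp]: "(edge_rel S TE)\<inverse> = edge_rel S TE"
  by (auto simp: edge_rel_def insert_commute)

lemma ug_connected_singleton: "ug_connected {x} E"
  by (simp add: ug_connected_def)

lemma ug_connected_neighbour:
  assumes "ug_connected S TE" "v \<in> S" "x \<in> S" "x \<noteq> v"
  obtains y where "y \<in> S" "{v, y} \<in> TE"
proof -
  have "(v, x) \<in> (edge_rel S TE)\<^sup>*"
    using assms(1-3) by (simp add: ug_connected_iff_edge_rel)
  then obtain y where "(v, y) \<in> edge_rel S TE"
    using assms(4) by (metis converse_rtranclE)
  then show ?thesis using that by (auto simp: edge_rel_def)
qed

lemma graph_on_edge_neq: "graph_on I TE \<Longrightarrow> {a, b} \<in> TE \<Longrightarrow> a \<noteq> b"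
  unfolding graph_on_def by fastforce

lemma graph_on_finite_edges: "graph_on I TE \<Longrightarrow> finite I \<Longrightarrow> finite TE"
  by (meson Pow_iff finite_Pow_iff finite_subset graph_on_def subsetI)

lemma graph_on_degree_sum:
  assumes g: "graph_on I TE" and fI: "finite I"
  shows "(\<Sum>v\<in>I. card {e\<in>TE. v \<in> e}) = 2 * card TE"
proof -
  have "(\<Sum>v\<in>I. card {e\<in>TE. v \<in> e}) = (\<Sum>v\<in>I. \<Sum>e\<in>TE. if v \<in> e then 1 else 0)"
    using graph_on_finite_edges[OF g fI] by (simp add: sum.inter_filter[symmetric])
  also have "\<dots> = (\<Sum>e\<in>TE. \<Sum>v\<in>I. if v \<in> e then 1 else 0)"
    by (rule sum.swap)
  also have "\<dots> = (\<Sum>e\<in>TE. card {v\<in>I. v \<in> e})"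
    using fI by (simp add: sum.inter_filter[symmetric])
  also have "\<dots> = (\<Sum>e\<in>TE. 2)"
  proof (rule sum.cong)
    fix e assume "e \<in> TE"
    then have "{v\<in>I. v \<in> e} = e" "card e = 2" using g by (auto simp: graph_on_def)
    then show "card {v\<in>I. v \<in> e} = 2" by simp
  qed simp
  finally show ?thesis by simp
qed

definition leaf :: "'b set set \<Rightarrow> 'b \<Rightarrow> 'b \<Rightarrow> bool" where
  "leaf TE l q \<longleftrightarrow> {l, q} \<in> TE \<and> (\<forall>e\<in>TE. l \<in> e \<longrightarrow> e = {l, q})"

lemma leaf_edge_eq: "graph_on I TE \<Longrightarrow> leaf TE l q \<Longrightarrow> {l, y} \<in> TE \<Longrightarrow> y = q"
  unfolding leaf_def using graph_on_edge_neq by (metis doubleton_eq_iff insertI1)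

lemma leaf_neighbour_in_connected:
  assumes "graph_on I TE" "leaf TE l q" "ug_connected S TE" "l \<in> S" "x \<in> S" "x \<noteq> l"
  shows "q \<in> S"
proof -
  obtain y where "y \<in> S" "{l, y} \<in> TE" using ug_connected_neighbour[OF assms(3-6)] .
  then show ?thesis using leaf_edge_eq[OF assms(1,2)] by blast
qed

lemma edge_rel_remove_leaf: "edge_rel (S - {l}) (TE - {{l, q}}) = edge_rel (S - {l}) TE"
  by (auto simp: edge_rel_def doubleton_eq_iff)

lemma ug_connected_remove_leaf:
  assumes g: "graph_on I TE" and lf: "leaf TE l q" and conn: "ug_connected S TE"
  shows "ug_connected (S - {l}) (TE - {{l, q}})"
  unfolding ug_connected_iff_edge_rel edge_rel_remove_leaf
proof (intro ballI)
  let ?R = "edge_rel (S - {l}) TE"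
  fix x y assume x: "x \<in> S - {l}" and y: "y \<in> S - {l}"
  have "(x, y) \<in> (edge_rel S TE)\<^sup>*"
    using conn x y by (simp add: ug_connected_iff_edge_rel)
  \<comment> \<open>A walk inside S can only enter the leaf l from q and must leave it back to q.\<close>
  then have "(y \<noteq> l \<longrightarrow> (x, y) \<in> ?R\<^sup>*) \<and> (y = l \<longrightarrow> q \<in> S - {l} \<and> (x, q) \<in> ?R\<^sup>*)"
  proof (induction rule: rtrancl_induct)
    case base
    then show ?case using x by simp
  next
    case (step z w)
    have e: "{z, w} \<in> TE" "z \<in> S" "w \<in> S" and zw: "z \<noteq> w"
      using step(2) graph_on_edge_neq[OF g] by (auto simp: edge_rel_def)
    show ?case
    proof (cases "z = l")
      case True
      then show ?thesis using step(3) e(1) zw leaf_edge_eq[OF g lf] by auto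
    next
      case False
      have "w = l \<Longrightarrow> z = q"
        using e(1) leaf_edge_eq[OF g lf] by (auto simp: insert_commute)
      moreover have "w \<noteq> l \<Longrightarrow> (z, w) \<in> ?R"
        using e False by (simp add: edge_rel_def)
      ultimately show ?thesis
        using step(3) False e(2) by (auto intro: rtrancl_into_rtrancl)
    qed
  qed
  then show "(x, y) \<in> ?R\<^sup>*" using y by simp
qed

lemma tree_has_leaf:
  assumes t: "is_tree I TE" and c2: "2 \<le> card I"
  obtains l q where "leaf TE l q"
proof -
  have fI: "finite I" and g: "graph_on I TE" and conn: "ug_connected I TE"
    and cE: "card TE = card I - 1" using t by (auto simp: is_tree_def)
  define deg where "deg v = card {e\<in>TE. v \<in> e}" for v
  have deg_pos: "1 \<le> deg v" if v: "v \<in> I" for v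
  proof -
    obtain w where "w \<in> I" "w \<noteq> v"
      using c2 v
      by (metis One_nat_def card.infinite card_le_Suc0_iff_eq not_less_eq_eq numeral_2_eq_2 zero_le)
    then obtain y where "{v, y} \<in> TE" using ug_connected_neighbour[OF conn v] by blast
    then show ?thesis
      unfolding deg_def using graph_on_finite_edges[OF g fI] by (auto simp: Suc_le_eq card_gt_0_iff)
  qed
  \<comment> \<open>Every degree is positive and they sum to 2 (card I - 1), so some vertex has degree 1.\<close>
  have "\<exists>v\<in>I. deg v \<le> 1"
  proof (rule ccontr)
    assume "\<not> ?thesis"
    then have "(\<Sum>v\<in>I. 2) \<le> (\<Sum>v\<in>I. deg v)" by (intro sum_mono) auto
    then show False using graph_on_degree_sum[OF g fI] cE c2 unfolding deg_def by simp
  qed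
  then obtain v where "v \<in> I" "deg v = 1" using deg_pos by force
  then obtain e0 where e0: "{e\<in>TE. v \<in> e} = {e0}" unfolding deg_def by (metis card_1_singletonE)
  then have "e0 \<in> TE" "v \<in> e0" by auto
  then obtain q where "e0 = {v, q}"
    using g unfolding graph_on_def by (metis card_2_iff insert_commute insert_iff singletonD)
  then have "leaf TE v q" unfolding leaf_def using e0 \<open>e0 \<in> TE\<close> by blast
  then show ?thesis by (rule that)
qed

lemma tree_remove_leaf:
  assumes t: "is_tree I TE" and lf: "leaf TE l q" and c2: "2 \<le> card I"
  shows "is_tree (I - {l}) (TE - {{l, q}})" and "l \<in> I" and "l \<noteq> q"
proof -
  have fI: "finite I" and g: "graph_on I TE" and conn: "ug_connected I TE"
    and cE: "card TE = card I - 1" using t by (auto simp: is_tree_def)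
  have lqE: "{l, q} \<in> TE" using lf by (simp add: leaf_def)
  then show lI: "l \<in> I" and lq: "l \<noteq> q"
    using g graph_on_edge_neq[OF g] by (auto simp: graph_on_def)
  have "q \<in> I" using g lqE by (auto simp: graph_on_def)
  have "graph_on (I - {l}) (TE - {{l, q}})"
    unfolding graph_on_def
  proof
    fix e assume e: "e \<in> TE - {{l, q}}"
    then have "l \<notin> e" using lf unfolding leaf_def by blast
    then show "e \<subseteq> I - {l} \<and> card e = 2" using e g unfolding graph_on_def by blast
  qed
  moreover have "card (TE - {{l, q}}) = card (I - {l}) - 1"
    using cE lqE lI fI by (simp add: card_Diff_singleton)
  ultimately show "is_tree (I - {l}) (TE - {{l, q}})"
    using fI lq \<open>q \<in> I\<close> ug_connected_remove_leaf[OF g lf conn] by (auto simp: is_tree_def)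
qed

lemma subtrees_remove_leaf:
  assumes g: "graph_on I TE" and lf: "leaf TE l q" and lq: "l \<noteq> q"
    and subtrees: "\<forall>S\<in>F. S \<subseteq> I \<and> S \<noteq> {} \<and> ug_connected S TE"
    and meet: "\<forall>S\<in>F. \<forall>S'\<in>F. S \<inter> S' \<noteq> {}"
    and not_leaf: "{l} \<notin> F"
  shows "\<forall>S'\<in>(\<lambda>S. S - {l}) ` F. S' \<subseteq> I - {l} \<and> S' \<noteq> {} \<and> ug_connected S' (TE - {{l, q}})"
    and "\<forall>A'\<in>(\<lambda>S. S - {l}) ` F. \<forall>B'\<in>(\<lambda>S. S - {l}) ` F. A' \<inter> B' \<noteq> {}"
proof -
  have S: "S \<subseteq> I" "S - {l} \<noteq> {}" "ug_connected S TE" "l \<in> S \<Longrightarrow> q \<in> S" if "S \<in> F" for S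
  proof -
    have "S \<subseteq> I" "S \<noteq> {}" "S \<noteq> {l}" "ug_connected S TE" using that subtrees not_leaf by auto
    then show "S \<subseteq> I" "S - {l} \<noteq> {}" "ug_connected S TE" "l \<in> S \<Longrightarrow> q \<in> S"
      using leaf_neighbour_in_connected[OF g lf] by blast+
  qed
  show "\<forall>S'\<in>(\<lambda>S. S - {l}) ` F. S' \<subseteq> I - {l} \<and> S' \<noteq> {} \<and> ug_connected S' (TE - {{l, q}})"
  proof
    fix S' assume "S' \<in> (\<lambda>S. S - {l}) ` F"
    then obtain S where "S \<in> F" "S' = S - {l}" by blast
    then show "S' \<subseteq> I - {l} \<and> S' \<noteq> {} \<and> ug_connected S' (TE - {{l, q}})"
      using S[OF \<open>S \<in> F\<close>] ug_connected_remove_leaf[OF g lf, of S] by blast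
  qed
  \<comment> \<open>Two subtrees meeting only in the leaf l both contain its neighbour q.\<close>
  show "\<forall>A'\<in>(\<lambda>S. S - {l}) ` F. \<forall>B'\<in>(\<lambda>S. S - {l}) ` F. A' \<inter> B' \<noteq> {}"
  proof (intro ballI)
    fix A' B' assume "A' \<in> (\<lambda>S. S - {l}) ` F" "B' \<in> (\<lambda>S. S - {l}) ` F"
    then obtain A B where AB: "A \<in> F" "B \<in> F" "A' = A - {l}" "B' = B - {l}" by blast
    show "A' \<inter> B' \<noteq> {}"
      using S(4)[OF AB(1)] S(4)[OF AB(2)] meet AB lq by blast
  qed
qed

lemma tree_subtrees_Helly:
  assumes "is_tree I TE"
    and "\<forall>S\<in>F. S \<subseteq> I \<and> S \<noteq> {} \<and> ug_connected S TE"
    and "\<forall>S\<in>F. \<forall>S'\<in>F. S \<inter> S' \<noteq> {}"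
  shows "\<exists>x\<in>I. \<forall>S\<in>F. x \<in> S"
  using assms
proof (induction "card I" arbitrary: I TE F rule: less_induct)
  case less
  have fI: "finite I" "I \<noteq> {}" and g: "graph_on I TE"
    using less.prems(1) by (auto simp: is_tree_def)
  show ?case
  proof (cases "card I \<le> 1")
    case True
    then obtain x where "I = {x}" using fI
      by (metis card_0_eq card_1_singletonE le_SucE One_nat_def le_zero_eq)
    then show ?thesis using less.prems(2) by auto
  next
    case False
    then have c2: "2 \<le> card I" by simp
    obtain l q where lf: "leaf TE l q" using tree_has_leaf[OF less.prems(1) c2] .
    note smaller = tree_remove_leaf[OF less.prems(1) lf c2]
    show ?thesis
    proof (cases "{l} \<in> F")
      case True
      then show ?thesis using less.prems(3) smaller(2) by blast
    next
      case False
      have "card (I - {l}) < card I"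
        using smaller(2) fI by (meson card_Diff1_less)
      then obtain x where "x \<in> I - {l}" "\<forall>S\<in>(\<lambda>S. S - {l}) ` F. x \<in> S"
        using less.hyps[OF _ smaller(1) subtrees_remove_leaf[OF g lf smaller(3) less.prems(2,3) False]]
        by blast
      then show ?thesis by blast
    qed
  qed
qed

section \<open>Tree decompositions and clique minors\<close>

lemma tree_decomposition_bags_meeting_connected:
  assumes td: "tree_decomposition V E I TE B" and XV: "X \<subseteq> V" and cX: "ug_connected X E"
  shows "ug_connected {i\<in>I. B i \<inter> X \<noteq> {}} TE"
proof -
  define S where "S = {i\<in>I. B i \<inter> X \<noteq> {}}"
  have vertex_conn: "\<forall>v\<in>V. ug_connected {i\<in>I. v \<in> B i} {e\<in>TE. e \<subseteq> {i\<in>I. v \<in> B i}}"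
    and edge_bag: "\<forall>e\<in>E. \<exists>i\<in>I. e \<subseteq> B i"
    using td by (auto simp: tree_decomposition_def)
  have same_vertex: "(i, j) \<in> (edge_rel S TE)\<^sup>*"
    if "v \<in> X" "i \<in> I" "j \<in> I" "v \<in> B i" "v \<in> B j" for v i j
  proof -
    have "(i, j) \<in> (edge_rel {i\<in>I. v \<in> B i} {e\<in>TE. e \<subseteq> {i\<in>I. v \<in> B i}})\<^sup>*"
      using vertex_conn that XV by (auto simp: ug_connected_iff_edge_rel)
    moreover have "edge_rel {i\<in>I. v \<in> B i} {e\<in>TE. e \<subseteq> {i\<in>I. v \<in> B i}} \<subseteq> edge_rel S TE"
      using that(1) unfolding S_def edge_rel_def by blast
    ultimately show ?thesis by (meson rtrancl_mono subsetD)
  qed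
  have "(i, j) \<in> (edge_rel S TE)\<^sup>*" if i: "i \<in> S" and j: "j \<in> S" for i j
  proof -
    obtain u where u: "u \<in> B i" "u \<in> X" using i unfolding S_def by blast
    obtain w where w: "w \<in> B j" "w \<in> X" using j unfolding S_def by blast
    have "(u, w) \<in> (edge_rel X E)\<^sup>*"
      using cX u w by (simp add: ug_connected_iff_edge_rel)
    then have "\<forall>j\<in>I. w \<in> B j \<longrightarrow> (i, j) \<in> (edge_rel S TE)\<^sup>*"
    proof (induction rule: rtrancl_induct)
      case base
      show ?case using same_vertex u i unfolding S_def by blast
    next
      case (step y z)
      have yz: "{y, z} \<in> E" "z \<in> X" using step(2) by (auto simp: edge_rel_def)
      obtain k where k: "k \<in> I" "{y, z} \<subseteq> B k" using edge_bag yz(1) by blast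
      then have "(i, k) \<in> (edge_rel S TE)\<^sup>*" using step(3) by simp
      then show ?case
        using same_vertex[of z k] yz(2) k by (meson insert_subset rtrancl_trans)
    qed
    then show ?thesis using w j unfolding S_def by blast
  qed
  then show ?thesis unfolding ug_connected_iff_edge_rel S_def by blast
qed

definition clique_minor_model :: "'a set \<Rightarrow> 'a set set \<Rightarrow> nat \<Rightarrow> (nat \<Rightarrow> 'a set) \<Rightarrow> bool" where
  "clique_minor_model V E m X \<longleftrightarrow>
     (\<forall>i<m. X i \<subseteq> V \<and> X i \<noteq> {} \<and> ug_connected (X i) E) \<and>
     (\<forall>i j. i < j \<and> j < m \<longrightarrow> X i \<inter> X j = {} \<and> (\<exists>u\<in>X i. \<exists>v\<in>X j. {u, v} \<in> E))"

lemma clique_minor_model_distinct: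
  assumes K: "clique_minor_model V E m X" and "k < m" "k' < m" "k \<noteq> k'"
  shows "X k \<inter> X k' = {}" and "\<exists>u\<in>X k. \<exists>v\<in>X k'. {u, v} \<in> E"
proof -
  have lt: "X i \<inter> X i' = {} \<and> (\<exists>u\<in>X i. \<exists>v\<in>X i'. {u, v} \<in> E)" if "i < i'" "i' < m" for i i'
    using K that unfolding clique_minor_model_def by simp
  have "X k \<inter> X k' = {} \<and> (\<exists>u\<in>X k. \<exists>v\<in>X k'. {u, v} \<in> E)"
  proof (cases "k < k'")
    case True
    then show ?thesis using lt assms(3) by simp
  next
    case False
    then have "k' < k" using assms(4) by simp
    then have disj: "X k' \<inter> X k = {}" and "\<exists>v\<in>X k'. \<exists>u\<in>X k. {v, u} \<in> E"
      using lt assms(2) by simp_all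
    then obtain v u where "v \<in> X k'" "u \<in> X k" "{u, v} \<in> E" by (auto simp: insert_commute)
    with disj show ?thesis by (auto simp: Int_commute)
  qed
  then show "X k \<inter> X k' = {}" "\<exists>u\<in>X k. \<exists>v\<in>X k'. {u, v} \<in> E" by simp_all
qed

lemma tree_decomposition_clique_minor_common_bag:
  assumes td: "tree_decomposition V E I TE B" and K: "clique_minor_model V E m X"
  shows "\<exists>i\<in>I. \<forall>k<m. B i \<inter> X k \<noteq> {}"
proof -
  define St where "St k = {i\<in>I. B i \<inter> X k \<noteq> {}}" for k
  have tree: "is_tree I TE" and cover: "(\<Union>i\<in>I. B i) = V"
    and edge_bag: "\<forall>e\<in>E. \<exists>i\<in>I. e \<subseteq> B i"
    using td by (auto simp: tree_decomposition_def)
  have branch: "X k \<subseteq> V" "X k \<noteq> {}" "ug_connected (X k) E" if "k < m" for k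
    using K that unfolding clique_minor_model_def by auto
  \<comment> \<open>The bags meeting a branch set form a subtree; adjacent branch sets give meeting subtrees.\<close>
  have subtrees: "\<forall>S\<in>St ` {..<m}. S \<subseteq> I \<and> S \<noteq> {} \<and> ug_connected S TE"
  proof
    fix S assume "S \<in> St ` {..<m}"
    then obtain k where k: "k < m" "S = St k" by blast
    have "St k \<noteq> {}" using branch[OF k(1)] cover unfolding St_def by blast
    then show "S \<subseteq> I \<and> S \<noteq> {} \<and> ug_connected S TE"
      using tree_decomposition_bags_meeting_connected[OF td branch(1,3)[OF k(1)]]
      unfolding k(2) St_def by simp
  qed
  have meet: "\<forall>S\<in>St ` {..<m}. \<forall>S'\<in>St ` {..<m}. S \<inter> S' \<noteq> {}"
  proof (intro ballI)
    fix S S' assume "S \<in> St ` {..<m}" "S' \<in> St ` {..<m}"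
    then obtain k k' where k: "k < m" "k' < m" "S = St k" "S' = St k'" by blast
    show "S \<inter> S' \<noteq> {}"
    proof (cases "k = k'")
      case True
      then show ?thesis using subtrees k by simp
    next
      case False
      then obtain u v where "u \<in> X k" "v \<in> X k'" "{u, v} \<in> E"
        using clique_minor_model_distinct(2)[OF K k(1,2)] by blast
      moreover obtain i where "i \<in> I" "{u, v} \<subseteq> B i"
        using edge_bag \<open>{u, v} \<in> E\<close> by blast
      ultimately have "i \<in> S \<inter> S'" unfolding k(3,4) St_def by blast
      then show ?thesis by blast
    qed
  qed
  obtain x where x: "x \<in> I" "\<forall>S\<in>St ` {..<m}. x \<in> S"
    using tree_subtrees_Helly[OF tree subtrees meet] by blast
  have "B x \<inter> X k \<noteq> {}" if "k < m" for k
    using x(2) that unfolding St_def by simp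
  then show ?thesis using x(1) by blast
qed

lemma card_ge_meeting_disjoint_family:
  assumes fA: "finite A" and disj: "disjoint_family_on X {..<m}"
    and meets: "\<And>k. k < m \<Longrightarrow> A \<inter> X k \<noteq> {}"
  shows "m \<le> card A"
proof -
  define u where "u k = (SOME v. v \<in> A \<inter> X k)" for k
  have u: "u k \<in> A \<inter> X k" if "k < m" for k
    unfolding u_def using meets[OF that] by (rule some_in_eq[THEN iffD2])
  have "inj_on u {..<m}"
  proof (rule inj_onI)
    fix k k' assume k: "k \<in> {..<m}" "k' \<in> {..<m}" and "u k = u k'"
    then have "u k \<in> X k \<inter> X k'" using u[of k] u[of k'] by simp
    then show "k = k'" using disj k unfolding disjoint_family_on_def by blast
  qed
  then have "m = card (u ` {..<m})" by (simp add: card_image)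
  also have "\<dots> \<le> card A" using u fA by (intro card_mono) auto
  finally show ?thesis .
qed

lemma tree_decomposition_clique_minor_bag:
  assumes td: "tree_decomposition V E I TE B" and fV: "finite V"
    and K: "clique_minor_model V E m X"
  shows "\<exists>i\<in>I. m \<le> card (B i)"
proof -
  obtain i where i: "i \<in> I" "\<forall>k<m. B i \<inter> X k \<noteq> {}"
    using tree_decomposition_clique_minor_common_bag[OF td K] by blast
  have "finite (B i)" using td i(1) fV unfolding tree_decomposition_def by (meson finite_subset)
  then have "m \<le> card (B i)"
  proof (rule card_ge_meeting_disjoint_family)
    show "disjoint_family_on X {..<m}"
      using clique_minor_model_distinct(1)[OF K] unfolding disjoint_family_on_def by blast
  qed (use i(2) in simp)
  then show ?thesis using i(1) by blast
qed

lemma treewidth_ge_clique_minor: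
  assumes g: "graph_on V E" and fV: "finite V" and K: "clique_minor_model V E m X"
  shows "m - 1 \<le> treewidth V E"
proof -
  have "tree_decomposition V E {0} {} (\<lambda>_. V)"
    using g by (auto simp: tree_decomposition_def is_tree_def graph_on_def ug_connected_def)
  then have "\<exists>w I TE B. tree_decomposition V E I TE B \<and> td_width I B = w" by blast
  from LeastI_ex[OF this] obtain I TE B
    where td: "tree_decomposition V E I TE B" "td_width I B = treewidth V E"
    unfolding treewidth_def by blast
  obtain i where i: "i \<in> I" "m \<le> card (B i)"
    using tree_decomposition_clique_minor_bag[OF td(1) fV K] by blast
  have "finite I" using td(1) by (simp add: tree_decomposition_def is_tree_def)
  then have "card (B i) \<le> Max ((\<lambda>i. card (B i)) ` I)" using i(1) by simp
  then show ?thesis using td(2) i(2) unfolding td_width_def by linarith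
qed

lemma ug_connected_path_interval:
  fixes p :: "nat \<Rightarrow> 'a"
  assumes path: "\<And>m. Suc m < n \<Longrightarrow> {p m, p (Suc m)} \<in> E" and "hi \<le> n"
  shows "ug_connected (p ` {lo..<hi}) E"
proof -
  let ?R = "edge_rel (p ` {lo..<hi}) E"
  have forward: "(p a, p b) \<in> ?R\<^sup>*" if "lo \<le> a" "a \<le> b" "b < hi" for a b
    using that
  proof (induction b)
    case (Suc b)
    show ?case
    proof (cases "a = Suc b")
      case False
      then have "(p a, p b) \<in> ?R\<^sup>*" using Suc by simp
      moreover have "(p b, p (Suc b)) \<in> ?R"
        using path[of b] Suc.prems False \<open>hi \<le> n\<close> unfolding edge_rel_def by auto
      ultimately show ?thesis by (rule rtrancl_into_rtrancl)
    qed simp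
  qed simp
  have "(p a, p b) \<in> ?R\<^sup>*" if "a \<in> {lo..<hi}" "b \<in> {lo..<hi}" for a b
  proof (cases "a \<le> b")
    case False
    then have "(p b, p a) \<in> ?R\<^sup>*" using forward that by simp
    then show ?thesis by (metis converse_edge_rel rtrancl_converseI)
  qed (use forward that in simp)
  then show ?thesis unfolding ug_connected_iff_edge_rel by blast
qed

lemma clique_minor_model_image:
  assumes inj: "inj_on p N"
    and branch: "\<And>i. i < m \<Longrightarrow> A i \<subseteq> N \<and> A i \<noteq> {} \<and> ug_connected (p ` A i) E"
    and pair: "\<And>i i'. i < i' \<Longrightarrow> i' < m \<Longrightarrow>
      A i \<inter> A i' = {} \<and> (\<exists>a\<in>A i. \<exists>b\<in>A i'. {p a, p b} \<in> E)"
  shows "clique_minor_model (p ` N) E m (\<lambda>i. p ` A i)"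
proof -
  have "p ` A i \<inter> p ` A i' = {}" if "i < i'" "i' < m" for i i'
  proof -
    have "A i \<subseteq> N" "A i' \<subseteq> N" using branch[of i] branch[of i'] that by simp_all
    then have "p ` (A i \<inter> A i') = p ` A i \<inter> p ` A i'" by (rule inj_on_image_Int[OF inj])
    then show ?thesis using pair[OF that] by simp
  qed
  moreover have "\<exists>u\<in>p ` A i. \<exists>v\<in>p ` A i'. {u, v} \<in> E" if "i < i'" "i' < m" for i i'
    using pair[OF that] by blast
  ultimately show ?thesis
    unfolding clique_minor_model_def using branch by blast
qed

lemma cycle_crossing_chords_clique_minor:
  fixes p :: "nat \<Rightarrow> 'a"
  assumes inj: "inj_on p {..<n}"
    and path: "\<And>m. Suc m < n \<Longrightarrow> {p m, p (Suc m)} \<in> E"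
    and closing: "{p (n - 1), p 0} \<in> E"
    and chords: "{p 0, p j} \<in> E" "{p k, p l} \<in> E"
    and order: "0 < k" "k < j" "j < l" "l < n"
  shows "clique_minor_model (p ` {..<n}) E 4 (\<lambda>i. p ` ([{0}, {j}, {1..<j}, {Suc j..<n}] ! i))"
proof -
  define A where "A i = [{0}, {j}, {1..<j}, {Suc j..<n}] ! i" for i
  have branch: "A i \<subseteq> {..<n} \<and> A i \<noteq> {} \<and> ug_connected (p ` A i) E" if "i < 4" for i
  proof -
    have "i = 0 \<or> i = 1 \<or> i = 2 \<or> i = 3" using that by presburger
    then show ?thesis
      using order ug_connected_path_interval[of n p E, OF path]
      by (auto simp: A_def ug_connected_singleton)
  qed
  have pair: "A i \<inter> A i' = {} \<and> (\<exists>a\<in>A i. \<exists>b\<in>A i'. {p a, p b} \<in> E)"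
    if "i < i'" "i' < 4" for i i'
  proof -
    have "i = 0 \<and> i' = 1 \<or> i = 0 \<and> i' = 2 \<or> i = 0 \<and> i' = 3 \<or>
        i = 1 \<and> i' = 2 \<or> i = 1 \<and> i' = 3 \<or> i = 2 \<and> i' = 3"
      using that by presburger
    then consider "i = 0" "i' = 1" | "i = 0" "i' = 2" | "i = 0" "i' = 3"
      | "i = 1" "i' = 2" | "i = 1" "i' = 3" | "i = 2" "i' = 3"
      by blast
    then show ?thesis
    proof cases
      case 1
      then show ?thesis using chords(1) order by (auto simp: A_def)
    next
      case 2
      then show ?thesis using path[of 0] order by (auto simp: A_def intro!: bexI[of _ 1])
    next
      case 3
      then show ?thesis using closing order
        by (auto simp: A_def insert_commute intro!: bexI[of _ "n - 1"])
    next
      case 4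
      then show ?thesis using path[of "j - 1"] order
        by (auto simp: A_def insert_commute intro!: bexI[of _ "j - 1"])
    next
      case 5
      then show ?thesis using path[of j] order by (auto simp: A_def intro!: bexI[of _ "Suc j"])
    next
      case 6
      have "k \<in> A 2" "l \<in> A 3" "A 2 \<inter> A 3 = {}" using order by (auto simp: A_def)
      then show ?thesis using 6 chords(2) by blast
    qed
  qed
  show ?thesis
    unfolding A_def[symmetric] by (rule clique_minor_model_image[OF inj branch pair])
qed

section \<open>Regular polygons\<close>

definition polygon_vertex :: "real \<Rightarrow> nat \<Rightarrow> nat \<Rightarrow> complex" where
  "polygon_vertex \<theta> n k = cis (\<theta> + 2 * pi * real k / real n)"

lemma dist_cis: "dist (cis x) (cis y) = 2 * \<bar>sin ((x - y) / 2)\<bar>"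
proof -
  have "(dist (cis x) (cis y))\<^sup>2 = (cos x - cos y)\<^sup>2 + (sin x - sin y)\<^sup>2"
    by (simp add: dist_norm cmod_def)
  also have "\<dots> = 2 - 2 * cos (x - y)"
    by (simp add: power2_eq_square cos_diff algebra_simps)
  also have "cos (x - y) = 1 - 2 * (sin ((x - y) / 2))\<^sup>2"
  proof -
    have "2 * ((x - y) / 2) = x - y" by simp
    then show ?thesis using cos_double_sin[of "(x - y) / 2"] by metis
  qed
  finally have "(dist (cis x) (cis y))\<^sup>2 = (2 * \<bar>sin ((x - y) / 2)\<bar>)\<^sup>2"
    by (simp add: power_mult_distrib)
  then show ?thesis
    by (metis abs_ge_zero power2_eq_imp_eq zero_le_dist mult_nonneg_nonneg zero_le_numeral)
qed

lemma dist_polygon_vertex: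
  "dist (polygon_vertex \<theta> n k) (polygon_vertex \<theta> n k') =
     2 * \<bar>sin (pi * (real k - real k') / real n)\<bar>"
proof -
  have "((\<theta> + 2 * pi * real k / real n) - (\<theta> + 2 * pi * real k' / real n)) / 2 =
      pi * (real k - real k') / real n"
    by (cases "n = 0") (simp_all add: field_simps)
  then show ?thesis by (simp add: polygon_vertex_def dist_cis)
qed

lemma sin_pi_frac_pos: "0 < x \<Longrightarrow> x < real n \<Longrightarrow> 0 < sin (pi * x / real n)"
  by (rule sin_gt_zero) (auto simp: field_simps)

lemma sgn_sin_pi_frac: "\<bar>x\<bar> < real n \<Longrightarrow> sgn (sin (pi * x / real n)) = sgn x"
proof (cases x "0 :: real" rule: linorder_cases)
  case less
  assume "\<bar>x\<bar> < real n"
  then have "0 < sin (pi * (- x) / real n)" using less by (intro sin_pi_frac_pos) auto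
  then show ?thesis using less by simp
next
  case greater
  assume "\<bar>x\<bar> < real n"
  then have "0 < sin (pi * x / real n)" using greater by (intro sin_pi_frac_pos) auto
  then show ?thesis using greater by simp
qed simp

lemma sin_le_sin_within_mirror:
  assumes "0 \<le> x" "x \<le> y" "y \<le> pi - x"
  shows "sin x \<le> sin y"
proof (cases "y \<le> pi / 2")
  case True
  then show ?thesis using assms by (intro sin_monotone_2pi_le) auto
next
  case False
  have "sin x \<le> sin (pi - y)" using assms False by (intro sin_monotone_2pi_le) auto
  then show ?thesis by simp
qed

lemma dist_polygon_vertex_ge:
  assumes "k < n" "k' < n" "k \<noteq> k'"
  shows "2 * sin (pi / real n) \<le> dist (polygon_vertex \<theta> n k) (polygon_vertex \<theta> n k')"
proof -
  define d where "d = \<bar>real k - real k'\<bar>"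
  have d: "1 \<le> d" "d \<le> real n - 1" using assms unfolding d_def by auto
  have "real k - real k' = d \<or> real k - real k' = - d" unfolding d_def by linarith
  then have "\<bar>sin (pi * (real k - real k') / real n)\<bar> = \<bar>sin (pi * d / real n)\<bar>"
    by (elim disjE) simp_all
  also have "\<dots> = sin (pi * d / real n)"
    using d sin_pi_frac_pos[of d n] by simp
  also have "sin (pi / real n) \<le> sin (pi * d / real n)"
  proof (rule sin_le_sin_within_mirror)
    have n: "0 < real n" using assms by simp
    show "0 \<le> pi / real n" using n by simp
    show "pi / real n \<le> pi * d / real n" using d n by (simp add: divide_right_mono)
    have "pi * (d + 1) \<le> pi * real n" using d by (intro mult_left_mono) auto
    then show "pi * d / real n \<le> pi - pi / real n" using n by (simp add: field_simps)
  qed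
  ultimately show ?thesis by (simp add: dist_polygon_vertex)
qed

lemma dist_polygon_vertex_Suc_mod:
  assumes "k < n"
  shows "dist (polygon_vertex \<theta> n k) (polygon_vertex \<theta> n (Suc k mod n)) = 2 * sin (pi / real n)"
proof -
  have pos: "0 \<le> sin (pi / real n)"
    using assms by (intro sin_ge_zero) (auto simp: field_simps)
  show ?thesis
  proof (cases "Suc k < n")
    case True
    have "pi * (real k - real (Suc k)) / real n = - (pi / real n)" by (simp add: field_simps)
    then show ?thesis using True pos by (simp add: dist_polygon_vertex)
  next
    case False
    then have "Suc k = n" using assms by simp
    then have "k = n - 1" "Suc k mod n = 0" by auto
    moreover have "pi * (real (n - 1) - real 0) / real n = pi - pi / real n"
      using assms by (simp add: of_nat_diff field_simps)
    ultimately show ?thesis using pos by (simp add: dist_polygon_vertex)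
  qed
qed

lemma inj_on_polygon_vertex: "inj_on (polygon_vertex \<theta> n) {..<n}"
proof (rule inj_onI)
  fix k k' assume k: "k \<in> {..<n}" "k' \<in> {..<n}"
    and eq: "polygon_vertex \<theta> n k = polygon_vertex \<theta> n k'"
  show "k = k'"
  proof (rule ccontr)
    assume "k \<noteq> k'"
    then have "2 \<le> n" using k by auto
    then have "0 < sin (pi / real n)" using sin_pi_frac_pos[of 1 n] by simp
    then show False using dist_polygon_vertex_ge[of k n k' \<theta>] \<open>k \<noteq> k'\<close> k eq by simp
  qed
qed

lemma polygon_vertex_rotate:
  assumes "0 < n"
  shows "polygon_vertex (\<theta> + 2 * pi * real i / real n) n k = polygon_vertex \<theta> n ((i + k) mod n)"
proof -
  have r: "real (i + k) = real ((i + k) mod n) + real ((i + k) div n) * real n"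
    by (metis mod_div_mult_eq of_nat_add of_nat_mult)
  have "\<theta> + 2 * pi * real i / real n + 2 * pi * real k / real n =
      \<theta> + 2 * pi * real (i + k) / real n"
    by (simp add: add_divide_distrib ring_distribs)
  also have "\<dots> = \<theta> + 2 * pi * real ((i + k) mod n) / real n + 2 * pi * real ((i + k) div n)"
    unfolding r using assms by (simp add: field_simps)
  finally show ?thesis
    unfolding polygon_vertex_def by (metis cis_multiple_2pi cis_mult mult_1_right Ints_of_nat)
qed

lemma polygon_vertex_rotate_image:
  assumes "i < n"
  shows "polygon_vertex (\<theta> + 2 * pi * real i / real n) n ` {..<n} = polygon_vertex \<theta> n ` {..<n}"
proof (rule card_subset_eq)
  show "finite (polygon_vertex \<theta> n ` {..<n})" by simp
  show "polygon_vertex (\<theta> + 2 * pi * real i / real n) n ` {..<n} \<subseteq> polygon_vertex \<theta> n ` {..<n}"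
    using assms by (auto simp: polygon_vertex_rotate)
  show "card (polygon_vertex (\<theta> + 2 * pi * real i / real n) n ` {..<n}) =
      card (polygon_vertex \<theta> n ` {..<n})"
    by (simp add: card_image inj_on_polygon_vertex)
qed

lemma polygon_vertex_rotate_to_zero:
  assumes "a \<in> polygon_vertex \<theta> n ` {..<n}"
  obtains \<theta>' where "polygon_vertex \<theta>' n ` {..<n} = polygon_vertex \<theta> n ` {..<n}"
    and "a = polygon_vertex \<theta>' n 0"
proof -
  obtain i where "i < n" "a = polygon_vertex \<theta> n i" using assms by blast
  then show ?thesis
    using that[of "\<theta> + 2 * pi * real i / real n"] polygon_vertex_rotate_image[of i n \<theta>]
      polygon_vertex_rotate[of n \<theta> i 0]
    by simp
qed

text \<open>Twice the signed area of the triangle a b z: for a \<noteq> b it vanishes exactly on the line ab.\<close>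
definition orient :: "complex \<Rightarrow> complex \<Rightarrow> complex \<Rightarrow> real" where
  "orient a b z = Im (cnj (b - a) * (z - a))"

lemma orient_closed_segment:
  assumes "z \<in> closed_segment a b"
  shows "orient a b z = 0"
proof -
  obtain u where z: "z = (1 - u) *\<^sub>R a + u *\<^sub>R b"
    using assms unfolding closed_segment_def by blast
  show ?thesis unfolding z orient_def by (simp add: scaleR_conv_of_real algebra_simps)
qed

lemma orient_convex_combination:
  "orient a b ((1 - v) *\<^sub>R c + v *\<^sub>R d) = (1 - v) * orient a b c + v * orient a b d"
  by (simp add: orient_def scaleR_conv_of_real algebra_simps)

lemma closed_segment_crossing_line:
  assumes "z \<in> closed_segment c d" "orient a b z = 0" "orient a b c \<noteq> 0 \<or> orient a b d \<noteq> 0"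
  shows "z = c \<and> orient a b c = 0 \<or> z = d \<and> orient a b d = 0 \<or> orient a b c * orient a b d < 0"
proof -
  obtain v where v: "0 \<le> v" "v \<le> 1" "z = (1 - v) *\<^sub>R c + v *\<^sub>R d"
    using assms(1) unfolding closed_segment_def by blast
  have comb: "(1 - v) * orient a b c + v * orient a b d = 0"
    using assms(2) unfolding v(3) orient_convex_combination .
  consider "orient a b c = 0" | "orient a b d = 0" | "orient a b c \<noteq> 0" "orient a b d \<noteq> 0"
    by blast
  then show ?thesis
  proof cases
    case 1
    then have "v = 0" using comb assms(3) by simp
    then show ?thesis using v(3) 1 by simp
  next
    case 2
    then have "v = 1" using comb assms(3) by simp
    then show ?thesis using v(3) 2 by simp
  next
    case 3
    have "orient a b c * orient a b d < 0"
    proof (rule ccontr)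
      assume "\<not> ?thesis"
      then have "0 < orient a b c * orient a b d" using 3 by (simp add: less_le)
      moreover have "0 < orient a b c * orient a b c" using 3 by (metis not_real_square_gt_zero)
      ultimately have "0 < (1 - v) * (orient a b c * orient a b c) + v * (orient a b c * orient a b d)"
        using v(1,2) by (cases "v = 1") (auto intro: add_pos_nonneg)
      also have "\<dots> = orient a b c * ((1 - v) * orient a b c + v * orient a b d)"
        by (simp add: algebra_simps)
      finally show False using comb by simp
    qed
    then show ?thesis by simp
  qed
qed

lemma sin_add_sin_minus_sin_add:
  fixes x y :: real
  shows "sin x + sin y - sin (x + y) = 4 * sin (x / 2) * sin (y / 2) * sin ((x + y) / 2)"
proof -
  define u v where "u = x / 2" and "v = y / 2"
  then have x: "x = 2 * u" and y: "y = 2 * v" by simp_all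
  have "sin (x + y) = 2 * sin u * cos u * (1 - 2 * (sin v)\<^sup>2) + (1 - 2 * (sin u)\<^sup>2) * (2 * sin v * cos v)"
    unfolding x y by (simp add: sin_add sin_double cos_double_sin)
  moreover have "sin x = 2 * sin u * cos u" "sin y = 2 * sin v * cos v"
    unfolding x y by (simp_all add: sin_double)
  moreover have "sin ((x + y) / 2) = sin u * cos v + cos u * sin v"
    by (simp add: u_def v_def add_divide_distrib sin_add)
  ultimately show ?thesis
    by (simp add: u_def [symmetric] v_def [symmetric] power2_eq_square algebra_simps)
qed

lemma orient_cis: "orient (cis a) (cis b) (cis c) = sin (c - b) + sin (b - a) - sin (c - a)"
  by (simp add: orient_def cos_diff sin_diff algebra_simps)

lemma orient_polygon_vertex:
  "orient (polygon_vertex \<theta> n 0) (polygon_vertex \<theta> n j) (polygon_vertex \<theta> n k) =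
     4 * sin (pi * (real k - real j) / real n) * sin (pi * real j / real n) * sin (pi * real k / real n)"
proof -
  define x where "x = 2 * pi * (real k - real j) / real n"
  define y where "y = 2 * pi * real j / real n"
  have "(\<theta> + 2 * pi * real k / real n) - (\<theta> + 2 * pi * real j / real n) = x"
    "(\<theta> + 2 * pi * real j / real n) - (\<theta> + 2 * pi * real 0 / real n) = y"
    "(\<theta> + 2 * pi * real k / real n) - (\<theta> + 2 * pi * real 0 / real n) = x + y"
    by (cases "n = 0"; simp add: x_def y_def field_simps)+
  then have "orient (polygon_vertex \<theta> n 0) (polygon_vertex \<theta> n j) (polygon_vertex \<theta> n k) =
      sin x + sin y - sin (x + y)"
    unfolding polygon_vertex_def orient_cis by presburger
  also have "\<dots> = 4 * sin (x / 2) * sin (y / 2) * sin ((x + y) / 2)"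
    by (rule sin_add_sin_minus_sin_add)
  also have "(x + y) / 2 = pi * real k / real n"
    by (cases "n = 0") (simp_all add: x_def y_def field_simps)
  finally show ?thesis by (simp add: x_def y_def)
qed

lemma sgn_orient_polygon_vertex:
  assumes "0 < j" "j < n" "k < n"
  shows "sgn (orient (polygon_vertex \<theta> n 0) (polygon_vertex \<theta> n j) (polygon_vertex \<theta> n k)) =
    (if k = 0 \<or> k = j then 0 else if k < j then -1 else 1)"
proof -
  have "\<bar>real k - real j\<bar> < real n" "\<bar>real j\<bar> < real n" "\<bar>real k\<bar> < real n"
    using assms by auto
  then show ?thesis
    using assms by (simp add: orient_polygon_vertex sgn_mult sgn_sin_pi_frac)
qed

lemma polygon_crossing_chords_interleave:
  fixes \<theta> :: real and n :: nat
  defines "q \<equiv> polygon_vertex \<theta> n"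
  assumes "0 < j" "j < n" "k < n" "l < n" "k \<noteq> l" "{0, j} \<noteq> {k, l}"
    and "z \<in> closed_segment (q 0) (q j)" "z \<in> closed_segment (q k) (q l)"
    and "z \<notin> {q 0, q j} \<inter> {q k, q l}"
  shows "0 < k \<and> k < j \<and> j < l \<or> 0 < l \<and> l < j \<and> j < k"
proof -
  let ?L = "orient (q 0) (q j)"
  have sgn_L: "sgn (?L (q i)) = (if i = 0 \<or> i = j then 0 else if i < j then -1 else 1)"
    if "i < n" for i
    unfolding q_def using assms(2,3) that by (rule sgn_orient_polygon_vertex)
  have on_line: "?L (q i) = 0 \<longleftrightarrow> i = 0 \<or> i = j" if "i < n" for i
    using sgn_L[OF that] by (auto simp: sgn_0_0 split: if_splits)
  have "?L (q k) \<noteq> 0 \<or> ?L (q l) \<noteq> 0"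
    using assms(4-7) on_line by auto
  then have "z = q k \<and> ?L (q k) = 0 \<or> z = q l \<and> ?L (q l) = 0 \<or> ?L (q k) * ?L (q l) < 0"
    using closed_segment_crossing_line assms(9) orient_closed_segment[OF assms(8)] by blast
  moreover have "\<not> (z = q i \<and> ?L (q i) = 0)" if "i \<in> {k, l}" for i
  proof
    assume "z = q i \<and> ?L (q i) = 0"
    moreover have "i < n" using that assms(4,5) by auto
    ultimately have "z = q i" "i = 0 \<or> i = j" using on_line by auto
    then show False using assms(10) that by auto
  qed
  ultimately have "sgn (?L (q k)) * sgn (?L (q l)) = -1"
    by (simp add: sgn_mult[symmetric] sgn_neg)
  then show ?thesis
    using sgn_L[OF assms(4)] sgn_L[OF assms(5)] by (auto split: if_splits)
qed

section \<open>Spanners on regular polygons\<close>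

lemma walk_length_ge_separation:
  assumes g: "graph_on P E" and sep: "\<forall>x\<in>P. \<forall>y\<in>P. x \<noteq> y \<longrightarrow> s \<le> dist x y"
    and walk: "is_walk E a b ps"
  shows "real (length ps - 1) * s \<le> walk_length ps"
proof -
  have "s \<le> dist (ps ! i) (ps ! Suc i)" if "i < length ps - 1" for i
  proof -
    have e: "{ps ! i, ps ! Suc i} \<in> E" using that walk by (simp add: is_walk_def)
    then have "ps ! i \<in> P" "ps ! Suc i \<in> P" using g unfolding graph_on_def by auto
    then show ?thesis using sep graph_on_edge_neq[OF g e] by blast
  qed
  then have "(\<Sum>i < length ps - 1. s) \<le> walk_length ps"
    unfolding walk_length_def by (intro sum_mono) auto
  then show ?thesis by simp
qed

text \<open>A walk from a to b other than the edge itself has at least two edges, each at least as long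
  as ab, so it is longer than t |ab|.\<close>
lemma t_spanner_closest_pair_edge:
  assumes sp: "t_spanner t P E" and t: "t < 2"
    and sep: "\<forall>x\<in>P. \<forall>y\<in>P. x \<noteq> y \<longrightarrow> s \<le> dist x y"
    and ab: "a \<in> P" "b \<in> P" "a \<noteq> b" "dist a b \<le> s"
  shows "{a, b} \<in> E"
proof -
  obtain ps where walk: "is_walk E a b ps" and short: "walk_length ps \<le> t * dist a b"
    using sp ab unfolding t_spanner_def by blast
  have s: "s = dist a b" "0 < s" using sep ab by force+
  have "real (length ps - 1) * s \<le> walk_length ps"
    using walk_length_ge_separation[OF _ sep walk] sp by (simp add: t_spanner_def)
  also have "\<dots> \<le> t * s" using short s by simp
  also have "\<dots> < 2 * s" using t s(2) by simp
  finally have "length ps \<le> 2" using s(2) by simp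
  moreover have "ps \<noteq> []" "hd ps = a" "last ps = b" using walk by (auto simp: is_walk_def)
  moreover have "length ps \<noteq> 1"
  proof
    assume "length ps = 1"
    then have "hd ps = last ps" by (cases ps) auto
    then show False using \<open>hd ps = a\<close> \<open>last ps = b\<close> ab(3) by simp
  qed
  moreover have "length ps \<noteq> 0" using \<open>ps \<noteq> []\<close> by simp
  ultimately have "length ps = 2" by presburger
  then obtain x y where "ps = [x, y]" by (metis length_0_conv length_Suc_conv numeral_2_eq_2)
  then show ?thesis using walk by (auto simp: is_walk_def)
qed

lemma polygon_side_in_spanner:
  assumes sp: "t_spanner t (polygon_vertex \<theta> n ` {..<n}) E" and "t < 2" "2 \<le> n" "k < n"
  shows "{polygon_vertex \<theta> n k, polygon_vertex \<theta> n (Suc k mod n)} \<in> E"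
proof (rule t_spanner_closest_pair_edge[OF sp \<open>t < 2\<close>])
  show "\<forall>x\<in>polygon_vertex \<theta> n ` {..<n}. \<forall>y\<in>polygon_vertex \<theta> n ` {..<n}.
      x \<noteq> y \<longrightarrow> 2 * sin (pi / real n) \<le> dist x y"
    using dist_polygon_vertex_ge by blast
  have "Suc k mod n \<noteq> k" using assms(3,4) by (cases "Suc k = n") auto
  then show "polygon_vertex \<theta> n k \<noteq> polygon_vertex \<theta> n (Suc k mod n)"
    using assms(3,4) inj_on_polygon_vertex[of \<theta> n] by (simp add: inj_on_eq_iff)
qed (use assms dist_polygon_vertex_Suc_mod in auto)

lemma polygon_spanner_interleaving_chords_treewidth:
  fixes \<theta> :: real and n :: nat
  defines "q \<equiv> polygon_vertex \<theta> n"
  assumes sp: "t_spanner t (q ` {..<n}) E" and t: "t < 2"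
    and chords: "{q 0, q j} \<in> E" "{q k, q l} \<in> E"
    and order: "0 < k" "k < j" "j < l" "l < n"
  shows "3 \<le> treewidth (q ` {..<n}) E"
proof -
  have side: "{q m, q (Suc m mod n)} \<in> E" if "m < n" for m
    unfolding q_def using polygon_side_in_spanner[OF sp[unfolded q_def] t _ that] order by simp
  have "clique_minor_model (q ` {..<n}) E 4 (\<lambda>i. q ` ([{0}, {j}, {1..<j}, {Suc j..<n}] ! i))"
  proof (rule cycle_crossing_chords_clique_minor[OF _ _ _ chords order])
    show "inj_on q {..<n}" unfolding q_def by (rule inj_on_polygon_vertex)
    show "{q m, q (Suc m)} \<in> E" if "Suc m < n" for m using side[of m] that by simp
    show "{q (n - 1), q 0} \<in> E" using side[of "n - 1"] order by simp
  qed
  moreover have "graph_on (q ` {..<n}) E" using sp by (simp add: t_spanner_def)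
  ultimately show ?thesis using treewidth_ge_clique_minor[of _ E 4] by simp
qed

lemma polygon_spanner_crossing_edges_treewidth:
  fixes \<theta> :: real and n :: nat
  defines "q \<equiv> polygon_vertex \<theta> n"
  assumes sp: "t_spanner t (q ` {..<n}) E" and t: "t < 2"
    and edges: "{q 0, b} \<in> E" "{c, d} \<in> E" "{q 0, b} \<noteq> {c, d}"
    and cross: "z \<in> closed_segment (q 0) b" "z \<in> closed_segment c d" "z \<notin> {q 0, b} \<inter> {c, d}"
  shows "3 \<le> treewidth (q ` {..<n}) E"
proof -
  have g: "graph_on (q ` {..<n}) E" using sp by (simp add: t_spanner_def)
  then have "b \<in> q ` {..<n}" "c \<in> q ` {..<n}" "d \<in> q ` {..<n}"
    using edges unfolding graph_on_def by auto
  then obtain j k l where jkl: "j < n" "k < n" "l < n" and bcd: "b = q j" "c = q k" "d = q l"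
    by (metis imageE lessThan_iff)
  have "q 0 \<noteq> q j" "q k \<noteq> q l" "{q 0, q j} \<noteq> {q k, q l}"
    using graph_on_edge_neq[OF g edges(1)] graph_on_edge_neq[OF g edges(2)] edges(3)
    unfolding bcd by simp_all
  then have idx: "0 < j" "k \<noteq> l" "{0, j} \<noteq> {k, l}"
    by (auto simp: gr0I dest: arg_cong[where f = "image q"])
  note interleaving_treewidth = polygon_spanner_interleaving_chords_treewidth[where \<theta> = \<theta> and n = n,
      folded q_def, OF sp t edges(1)[unfolded bcd]]
  have "0 < k \<and> k < j \<and> j < l \<or> 0 < l \<and> l < j \<and> j < k"
    using polygon_crossing_chords_interleave[where \<theta> = \<theta> and n = n, folded q_def,
        OF idx(1) jkl idx(2,3) cross[unfolded bcd]] .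
  then show ?thesis
  proof
    assume "0 < k \<and> k < j \<and> j < l"
    then show ?thesis using jkl by (intro interleaving_treewidth[OF edges(2)[unfolded bcd]]) auto
  next
    assume "0 < l \<and> l < j \<and> j < k"
    moreover have "{q l, q k} \<in> E" using edges(2) unfolding bcd by (simp add: insert_commute)
    ultimately show ?thesis using jkl by (intro interleaving_treewidth) auto
  qed
qed

theorem lemma27:
  fixes n :: nat and \<theta> t :: real and P :: "complex set" and E :: "complex set set"
  assumes "n \<ge> 3"
    and "P = {cis (\<theta> + 2 * pi * real k / real n) | k. k < n}"
    and "t_spanner t P E"
    and "t < 2"
    and "treewidth P E = 2"
  shows "plane E"
proof (rule ccontr)
  assume "\<not> plane E"
  then obtain a b c d z where edges: "{a, b} \<in> E" "{c, d} \<in> E" "{a, b} \<noteq> {c, d}"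
    and cross: "z \<in> closed_segment a b" "z \<in> closed_segment c d" "z \<notin> {a, b} \<inter> {c, d}"
    unfolding plane_def by blast
  have P: "P = polygon_vertex \<theta> n ` {..<n}" using assms(2) by (auto simp: polygon_vertex_def)
  have "a \<in> P" using edges(1) assms(3) by (auto simp: t_spanner_def graph_on_def)
  then obtain \<theta>' where P': "polygon_vertex \<theta>' n ` {..<n} = P" and a: "a = polygon_vertex \<theta>' n 0"
    unfolding P by (rule polygon_vertex_rotate_to_zero)
  have "3 \<le> treewidth P E"
    using polygon_spanner_crossing_edges_treewidth[of t \<theta>' n E b c d z] assms(3,4) edges cross
    unfolding P'[symmetric] a by blast
  then show False using assms(5) by simp
qed

end
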